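(* Let $(h,n)=(3,3)$ and $p\in\mathcal P$. Then: (i) the following are equivalent: (a) the three alternatives ranked first by the three individuals are pairwise distinct and the three alternatives ranked third are pairwise distinct; (b) $\Gamma_2(p)$ is a $3$-cycle. Moreover, if one of these conditions holds, the arc set of $\Gamma_3(p)$ is empty. (ii) $\mu(p)=\mu(p^r)$.
   Context: Here $N=\{1,2,3\}$, $H=\{1,2,3\}$, $\mathcal P$ the set of triples of linear orders on $N$, $p^r$ the profile obtained by reversing each order; $x>_{p_i}y$ means $x\neq y$ and $p_i$ ranks $x$ above $y$; for $\mu\in\{2,3\}$, $x>^p_\mu y$ means $|\{i: x>_{p_i}y\}|\ge\mu$, $\Gamma_\mu(p)$ is the directed graph $(N,\{(x,y): x>^p_\mu y\})$, $D_\mu(p)=\{x\in N: \forall y,\ |\{i: y>_{p_i}x\}|<\mu\}$, and $\mu(p)=\min\{\mu\in\{2,3\}: D_\mu(p)\ne\varnothing\}$. A $3$-cycle is a directed graph on three vertices $x_1,x_2,x_3$ whose arc set is exactly $\{(x_1,x_2),(x_2,x_3),(x_3,x_1)\}$. *)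

theory Defs
  imports Main
begin

text \<open>A linear order on N is a relation R with (x,y) \<in> R meaning "x is ranked weakly above y".\<close>

definition Alts :: "nat set" where "Alts = {1,2,3}"
definition Inds :: "nat set" where "Inds = {1,2,3}"

type_synonym profile = "nat \<Rightarrow> (nat \<times> nat) set"

definition is_profile :: "profile \<Rightarrow> bool" where
  "is_profile p \<longleftrightarrow> (\<forall>i\<in>Inds. linear_order_on Alts (p i))"

definition rev_profile :: "profile \<Rightarrow> profile" where
  "rev_profile p = (\<lambda>i. converse (p i))"

definition pref :: "(nat \<times> nat) set \<Rightarrow> nat \<Rightarrow> nat \<Rightarrow> bool" where
  "pref R x y \<longleftrightarrow> x \<noteq> y \<and> (x, y) \<in> R"

definition is_first :: "profile \<Rightarrow> nat \<Rightarrow> nat \<Rightarrow> bool" where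
  "is_first p i x \<longleftrightarrow> x \<in> Alts \<and> (\<forall>y\<in>Alts. y \<noteq> x \<longrightarrow> pref (p i) x y)"

definition is_third :: "profile \<Rightarrow> nat \<Rightarrow> nat \<Rightarrow> bool" where
  "is_third p i x \<longleftrightarrow> x \<in> Alts \<and> (\<forall>y\<in>Alts. y \<noteq> x \<longrightarrow> pref (p i) y x)"

definition maj :: "profile \<Rightarrow> nat \<Rightarrow> nat \<Rightarrow> nat \<Rightarrow> bool" where
  "maj p \<mu> x y \<longleftrightarrow> card {i \<in> Inds. pref (p i) x y} \<ge> \<mu>"

definition Gamma_arcs :: "nat \<Rightarrow> profile \<Rightarrow> (nat \<times> nat) set" where
  "Gamma_arcs \<mu> p = {(x, y). x \<in> Alts \<and> y \<in> Alts \<and> maj p \<mu> x y}"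

definition is_3cycle :: "'a set \<Rightarrow> ('a \<times> 'a) set \<Rightarrow> bool" where
  "is_3cycle V E \<longleftrightarrow> (\<exists>x1 x2 x3. distinct [x1, x2, x3] \<and> V = {x1, x2, x3} \<and>
      E = {(x1, x2), (x2, x3), (x3, x1)})"

definition D :: "nat \<Rightarrow> profile \<Rightarrow> nat set" where
  "D \<mu> p = {x \<in> Alts. \<forall>y\<in>Alts. card {i \<in> Inds. pref (p i) y x} < \<mu>}"

definition mu :: "profile \<Rightarrow> nat" where
  "mu p = Min {m \<in> {2, 3}. D m p \<noteq> {}}"

end

theory Submission
  imports Defs
begin

text \<open>With three voters and strict rankings, exactly one of any two alternatives beats the other
  by a majority of two, so \<open>\<Gamma>\<^sub>2(p)\<close> is a tournament on three vertices and \<open>D\<^sub>2(p)\<close> is its set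
  of sources. Such a tournament is a 3-cycle iff it has no source, iff it has no sink; reversing
  the profile turns sources into sinks, and \<open>D\<^sub>3(p)\<close> always contains the favourite of voter 1,
  whence \<open>\<mu>(p) = \<mu>(p\<^sup>r)\<close>. A first (third) choice shared by two voters is a source (sink).
  Conversely, if first and third choices are pairwise distinct, every alternative \<open>x\<close> is last
  for some voter \<open>k\<close>, and one of the other two voters ranks some \<open>t \<noteq> x\<close> first, so \<open>t\<close> beats
  \<open>x\<close> twice. Finally, under a cycle a unanimous preference \<open>x > y\<close> would let the majority for
  \<open>z\<close> over \<open>x\<close> transfer to \<open>z\<close> over \<open>y\<close>, contradicting \<open>y \<rightarrow> z\<close>.\<close>

definition tournament_on :: "'a set \<Rightarrow> ('a \<Rightarrow> 'a \<Rightarrow> bool) \<Rightarrow> bool" where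
  "tournament_on V T \<longleftrightarrow>
     (\<forall>x\<in>V. \<forall>y\<in>V. x \<noteq> y \<longrightarrow> T x y \<or> T y x) \<and> (\<forall>x y. T x y \<longrightarrow> \<not> T y x)"

lemma tournament_on_converse: "tournament_on V T \<Longrightarrow> tournament_on V (\<lambda>x y. T y x)"
  unfolding tournament_on_def by blast

lemma tournament3_source_imp_sink:
  assumes T: "tournament_on V T" and "card V = 3"
    and source: "x \<in> V" "\<forall>y\<in>V. \<not> T y x"
  shows "\<exists>z\<in>V. \<forall>y\<in>V. \<not> T z y"
proof -
  obtain u w where V: "V = {x, u, w}" and "u \<noteq> w" "u \<noteq> x" "w \<noteq> x"
    using \<open>card V = 3\<close> \<open>x \<in> V\<close> by (auto simp: card_3_iff)
  then have "T u w \<or> T w u"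
    using T by (auto simp: tournament_on_def)
  then obtain z y where "V = {x, y, z}" "T y z"
    using V by (auto simp: insert_commute)
  then show ?thesis
    using T source by (auto simp: tournament_on_def)
qed

lemma tournament3_source_iff_sink:
  assumes "tournament_on V T" and "card V = 3"
  shows "(\<exists>x\<in>V. \<forall>y\<in>V. \<not> T y x) \<longleftrightarrow> (\<exists>x\<in>V. \<forall>y\<in>V. \<not> T x y)"
  using tournament3_source_imp_sink[OF assms]
    tournament3_source_imp_sink[OF tournament_on_converse[OF assms(1)] assms(2)] by blast

lemma tournament3_cycle_iff_no_source:
  assumes T: "tournament_on V T" and card: "card V = 3"
  shows "is_3cycle V {(x, y). x \<in> V \<and> y \<in> V \<and> T x y} \<longleftrightarrow> (\<forall>x\<in>V. \<exists>y\<in>V. T y x)"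
proof
  assume "is_3cycle V {(x, y). x \<in> V \<and> y \<in> V \<and> T x y}"
  then obtain x1 x2 x3 where V: "V = {x1, x2, x3}"
    and "{(x, y). x \<in> V \<and> y \<in> V \<and> T x y} = {(x1, x2), (x2, x3), (x3, x1)}"
    unfolding is_3cycle_def by blast
  then have "T x3 x1" "T x1 x2" "T x2 x3"
    by (blast dest: equalityD2)+
  then show "\<forall>x\<in>V. \<exists>y\<in>V. T y x"
    using V by auto
next
  assume no_source: "\<forall>x\<in>V. \<exists>y\<in>V. T y x"
  have asym: "T x y \<Longrightarrow> \<not> T y x" for x y
    using T by (auto simp: tournament_on_def)
  obtain x where "x \<in> V"
    using card by fastforce
  then obtain y z where "y \<in> V" "z \<in> V" "T y x" "T z y"
    using no_source by blast
  then have distinct: "distinct [x, z, y]"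
    using asym by auto
  have V: "V = {x, z, y}"
    using distinct card \<open>x \<in> V\<close> \<open>y \<in> V\<close> \<open>z \<in> V\<close>
    by (intro card_subset_eq[symmetric]) (auto intro: card_ge_0_finite)
  have "T x z"
  proof (rule ccontr)
    assume "\<not> T x z"
    then have "\<forall>w\<in>V. \<not> T w z"
      using V asym \<open>T z y\<close> by auto
    then show False
      using no_source \<open>z \<in> V\<close> by blast
  qed
  then have "{(x, y). x \<in> V \<and> y \<in> V \<and> T x y} = {(x, z), (z, y), (y, x)}"
    using V asym \<open>T y x\<close> \<open>T z y\<close> by auto
  then show "is_3cycle V {(x, y). x \<in> V \<and> y \<in> V \<and> T x y}"
    unfolding is_3cycle_def using distinct V by blast
qed

lemma is_3cycle_asym: "is_3cycle V E \<Longrightarrow> (x, y) \<in> E \<Longrightarrow> (y, x) \<notin> E"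
  unfolding is_3cycle_def by auto

lemma is_3cycle_closing_vertex:
  "is_3cycle V E \<Longrightarrow> (x, y) \<in> E \<Longrightarrow> \<exists>z. (y, z) \<in> E \<and> (z, x) \<in> E"
  unfolding is_3cycle_def by auto

lemma pref_asym: "antisym R \<Longrightarrow> pref R x y \<Longrightarrow> \<not> pref R y x"
  unfolding pref_def by (auto dest: antisymD)

lemma pref_total: "total_on A R \<Longrightarrow> x \<in> A \<Longrightarrow> y \<in> A \<Longrightarrow> x \<noteq> y \<Longrightarrow> pref R x y \<or> pref R y x"
  unfolding pref_def total_on_def by blast

lemma pref_trans: "trans R \<Longrightarrow> antisym R \<Longrightarrow> pref R x y \<Longrightarrow> pref R y z \<Longrightarrow> pref R x z"
  unfolding pref_def by (auto dest: antisymD transD)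

lemma pref_converse: "pref (R\<inverse>) x y \<longleftrightarrow> pref R y x"
  unfolding pref_def by auto

lemma linear_order_on_has_first:
  assumes "finite A" "A \<noteq> {}" and R: "linear_order_on A R"
  shows "\<exists>x\<in>A. \<forall>y\<in>A. y \<noteq> x \<longrightarrow> pref R x y"
proof -
  have "finite R"
    using R \<open>finite A\<close> by (auto simp: linear_order_on_def dest: partial_order_onD(4) finite_subset)
  then have "wf (R - Id)"
    using R partial_order_on_well_order_on[OF \<open>finite R\<close>] unfolding linear_order_on_def by blast
  then obtain x where "x \<in> A" and nothing_above: "\<And>y. (y, x) \<in> R - Id \<Longrightarrow> y \<notin> A"
    using wfE_min' \<open>A \<noteq> {}\<close> by blast
  have "total_on A R"
    using R by (simp add: linear_order_on_def)
  have "pref R x y" if "y \<in> A" "y \<noteq> x" for y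
  proof -
    have "(y, x) \<notin> R"
      using nothing_above that by blast
    then show ?thesis
      using \<open>total_on A R\<close> \<open>x \<in> A\<close> that unfolding total_on_def pref_def by blast
  qed
  then show ?thesis
    using \<open>x \<in> A\<close> by blast
qed

lemma card_Alts: "card Alts = 3" and card_Inds: "card Inds = 3" and finite_Inds: "finite Inds"
  by (simp_all add: Alts_def Inds_def)

lemma card_Inds_minus: "i \<in> Inds \<Longrightarrow> card (Inds - {i}) = 2"
  by (simp add: card_Inds)

lemma is_profileD:
  assumes "is_profile p" "i \<in> Inds"
  shows "linear_order_on Alts (p i)" "antisym (p i)" "trans (p i)" "total_on Alts (p i)"
  using assms by (auto simp: is_profile_def linear_order_on_def dest: partial_order_onD)

lemma is_profile_rev_profile: "is_profile p \<Longrightarrow> is_profile (rev_profile p)"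
  by (simp add: is_profile_def rev_profile_def)

lemma is_first_rev_profile: "is_first (rev_profile p) = is_third p"
  by (auto simp: fun_eq_iff is_first_def is_third_def rev_profile_def pref_converse)

lemma maj_rev_profile: "maj (rev_profile p) \<mu> x y \<longleftrightarrow> maj p \<mu> y x"
  by (simp add: maj_def rev_profile_def pref_converse)

lemma is_profile_has_first: "is_profile p \<Longrightarrow> i \<in> Inds \<Longrightarrow> \<exists>x. is_first p i x"
  using linear_order_on_has_first[of Alts "p i"] is_profileD(1)
  by (auto simp: is_first_def Alts_def)

lemma is_profile_has_third: "is_profile p \<Longrightarrow> i \<in> Inds \<Longrightarrow> \<exists>x. is_third p i x"
  using is_profile_has_first[OF is_profile_rev_profile] by (simp add: is_first_rev_profile)

lemma first_not_beaten_by_its_voter: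
  assumes p: "is_profile p" and "i \<in> Inds" "is_first p i x" "y \<in> Alts"
  shows "{k \<in> Inds. pref (p k) y x} \<subseteq> Inds - {i}"
proof (intro subsetI DiffI)
  fix k assume "k \<in> {k \<in> Inds. pref (p k) y x}"
  then have "k \<in> Inds" "pref (p k) y x" by simp_all
  moreover have "pref (p i) x y"
    using assms \<open>pref (p k) y x\<close> by (simp add: is_first_def pref_def)
  ultimately show "k \<notin> {i}"
    using pref_asym[OF is_profileD(2)[OF p \<open>i \<in> Inds\<close>]] by auto
qed simp

lemma tournament_on_maj:
  assumes p: "is_profile p"
  shows "tournament_on Alts (maj p 2)"
proof -
  define S where "S x y = {i \<in> Inds. pref (p i) x y}" for x y
  have card_sum: "card (S x y) + card (S y x) = card (S x y \<union> S y x)" for x y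
  proof (rule card_Un_disjoint[symmetric])
    show "S x y \<inter> S y x = {}"
      using pref_asym[OF is_profileD(2)[OF p]] by (auto simp: S_def)
  qed (simp_all add: S_def Inds_def)
  have "card (S x y \<union> S y x) \<le> card Inds" for x y
    by (rule card_mono) (auto simp: S_def Inds_def)
  then have le3: "card (S x y) + card (S y x) \<le> 3" for x y
    using card_sum[of x y] by (simp add: card_Inds)
  have asym: "\<not> (2 \<le> card (S x y) \<and> 2 \<le> card (S y x))" for x y
    using le3[of x y] by linarith
  have "S x y \<union> S y x = Inds" if "x \<in> Alts" "y \<in> Alts" "x \<noteq> y" for x y
    using pref_total[OF is_profileD(4)[OF p] that] by (auto simp: S_def)
  then have "card (S x y) + card (S y x) = 3" if "x \<in> Alts" "y \<in> Alts" "x \<noteq> y" for x y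
    using card_sum[of x y] that by (simp add: card_Inds)
  then have total: "2 \<le> card (S x y) \<or> 2 \<le> card (S y x)"
    if "x \<in> Alts" "y \<in> Alts" "x \<noteq> y" for x y
    using that by fastforce
  show ?thesis
    unfolding tournament_on_def maj_def S_def[symmetric] using asym total by blast
qed

lemma D2_eq: "D 2 p = {x \<in> Alts. \<forall>y\<in>Alts. \<not> maj p 2 y x}"
  by (auto simp: D_def maj_def not_le)

lemma is_3cycle_Gamma_arcs_2_iff:
  assumes "is_profile p"
  shows "is_3cycle Alts (Gamma_arcs 2 p) \<longleftrightarrow> D 2 p = {}"
  using tournament3_cycle_iff_no_source[OF tournament_on_maj[OF assms] card_Alts]
  by (auto simp: Gamma_arcs_def D2_eq)

lemma D2_rev_profile_empty_iff:
  assumes "is_profile p"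
  shows "D 2 (rev_profile p) = {} \<longleftrightarrow> D 2 p = {}"
  using tournament3_source_iff_sink[OF tournament_on_maj[OF assms] card_Alts]
  by (auto simp: D2_eq maj_rev_profile)

lemma D3_nonempty:
  assumes "is_profile p"
  shows "D 3 p \<noteq> {}"
proof -
  obtain x where x: "is_first p 1 x"
    using is_profile_has_first[OF assms] by (auto simp: Inds_def)
  have "card {k \<in> Inds. pref (p k) y x} < 3" if "y \<in> Alts" for y
  proof -
    have "card {k \<in> Inds. pref (p k) y x} \<le> card (Inds - {1})"
      using first_not_beaten_by_its_voter[OF assms _ x that] by (intro card_mono) (auto simp: Inds_def)
    then show ?thesis
      by (simp add: card_Inds_minus Inds_def)
  qed
  then have "x \<in> D 3 p"
    using x by (simp add: D_def is_first_def)
  then show ?thesis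
    by blast
qed

text \<open>The junk value \<open>Min {}\<close> in the definition of \<open>mu\<close> is ruled out by \<open>D 3 p \<noteq> {}\<close>.\<close>

lemma mu_eq: "D 3 p \<noteq> {} \<Longrightarrow> mu p = (if D 2 p = {} then 3 else 2)"
proof -
  assume "D 3 p \<noteq> {}"
  then have "{m \<in> {2, 3}. D m p \<noteq> {}} = (if D 2 p = {} then {3} else {2, 3})"
    by auto
  then show ?thesis
    by (simp add: mu_def)
qed

definition no_common_choice :: "(nat \<Rightarrow> nat \<Rightarrow> bool) \<Rightarrow> bool" where
  "no_common_choice P \<longleftrightarrow> (\<forall>i\<in>Inds. \<forall>j\<in>Inds. i \<noteq> j \<longrightarrow> (\<forall>x. \<not> (P i x \<and> P j x)))"


lemma common_first_imp_D2_nonempty: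
  assumes p: "is_profile p" and "\<not> no_common_choice (is_first p)"
  shows "D 2 p \<noteq> {}"
proof -
  obtain i j x where ij: "i \<in> Inds" "j \<in> Inds" "i \<noteq> j" and x: "is_first p i x" "is_first p j x"
    using assms(2) unfolding no_common_choice_def by blast
  have "card {k \<in> Inds. pref (p k) y x} < 2" if "y \<in> Alts" for y
  proof -
    have "card {k \<in> Inds. pref (p k) y x} \<le> card (Inds - {i} - {j})"
      using first_not_beaten_by_its_voter[OF p ij(1) x(1) that]
        first_not_beaten_by_its_voter[OF p ij(2) x(2) that]
      by (intro card_mono) (auto simp: Inds_def)
    also have "\<dots> = 1"
      using ij by (simp add: card_Inds)
    finally show ?thesis
      by simp
  qed
  then have "x \<in> D 2 p"
    using x by (simp add: D_def is_first_def)
  then show ?thesis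
    by blast
qed


lemma no_common_third_surj:
  assumes p: "is_profile p" and "no_common_choice (is_third p)" and "x \<in> Alts"
  shows "\<exists>k\<in>Inds. is_third p k x"
proof -
  obtain b where b: "\<And>i. i \<in> Inds \<Longrightarrow> is_third p i (b i)"
    using is_profile_has_third[OF p] by metis
  have "inj_on b Inds"
    using assms(2) b unfolding no_common_choice_def inj_on_def by metis
  moreover have "b ` Inds \<subseteq> Alts"
    using b by (auto simp: is_third_def)
  ultimately have "b ` Inds = Alts"
    by (intro card_subset_eq) (simp_all add: card_image card_Alts card_Inds Alts_def)
  then show ?thesis
    using b \<open>x \<in> Alts\<close> by (metis imageE)
qed


lemma distinct_firsts_thirds_imp_D2_empty:
  assumes p: "is_profile p"
    and firsts: "no_common_choice (is_first p)" and thirds: "no_common_choice (is_third p)"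
  shows "D 2 p = {}"
proof (rule ccontr)
  assume "D 2 p \<noteq> {}"
  then obtain x where "x \<in> Alts" and x: "\<forall>y\<in>Alts. card {l \<in> Inds. pref (p l) y x} < 2"
    by (auto simp: D_def)
  then obtain k where k: "k \<in> Inds" "is_third p k x"
    using no_common_third_surj[OF p thirds] by blast
  obtain i j where ij: "Inds - {k} = {i, j}" "i \<noteq> j"
    using card_Inds_minus[OF k(1)] by (auto simp: card_2_iff)
  have "i \<in> Inds" "j \<in> Inds" "i \<noteq> k" "j \<noteq> k"
    using ij by blast+
  moreover obtain ti tj where "is_first p i ti" "is_first p j tj"
    using is_profile_has_first[OF p] \<open>i \<in> Inds\<close> \<open>j \<in> Inds\<close> by blast
  moreover have "ti \<noteq> x \<or> tj \<noteq> x"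
    using firsts ij calculation unfolding no_common_choice_def by metis
  ultimately obtain l t where l: "l \<in> Inds" "l \<noteq> k" and t: "is_first p l t" "t \<noteq> x"
    by blast
  then have "pref (p l) t x" "pref (p k) t x" "t \<in> Alts"
    using k \<open>x \<in> Alts\<close> by (auto simp: is_first_def is_third_def)
  then have "{l, k} \<subseteq> {m \<in> Inds. pref (p m) t x}"
    using k l by auto
  then have "card {l, k} \<le> card {m \<in> Inds. pref (p m) t x}"
    by (rule card_mono[rotated]) (simp add: Inds_def)
  then have "2 \<le> card {m \<in> Inds. pref (p m) t x}"
    using l by simp
  then show False
    using x \<open>t \<in> Alts\<close> by fastforce
qed


lemma unanimity_transfers_majority:
  assumes p: "is_profile p" and "maj p 3 x y" "maj p 2 z x"
  shows "maj p 2 z y"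
proof -
  have "card {i \<in> Inds. pref (p i) x y} = card Inds"
    using \<open>maj p 3 x y\<close> card_mono[OF finite_Inds, of "{i \<in> Inds. pref (p i) x y}"]
    by (simp add: maj_def card_Inds)
  then have "{i \<in> Inds. pref (p i) x y} = Inds"
    by (intro card_subset_eq finite_Inds) auto
  then have "{i \<in> Inds. pref (p i) z x} \<subseteq> {i \<in> Inds. pref (p i) z y}"
    using pref_trans[OF is_profileD(3,2)[OF p]] by blast
  then have "card {i \<in> Inds. pref (p i) z x} \<le> card {i \<in> Inds. pref (p i) z y}"
    by (rule card_mono[rotated]) (simp add: finite_Inds)
  then show ?thesis
    using \<open>maj p 2 z x\<close> by (simp add: maj_def)
qed


lemma cycle_imp_Gamma_arcs_3_empty:
  assumes p: "is_profile p" and cycle: "is_3cycle Alts (Gamma_arcs 2 p)"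
  shows "Gamma_arcs 3 p = {}"
proof (rule ccontr)
  assume "Gamma_arcs 3 p \<noteq> {}"
  then obtain x y where xy: "x \<in> Alts" "y \<in> Alts" "maj p 3 x y"
    by (auto simp: Gamma_arcs_def)
  then have "(x, y) \<in> Gamma_arcs 2 p"
    by (simp add: Gamma_arcs_def maj_def)
  then obtain z where "(y, z) \<in> Gamma_arcs 2 p" "(z, x) \<in> Gamma_arcs 2 p"
    using is_3cycle_closing_vertex[OF cycle] by blast
  moreover from this have "(z, y) \<in> Gamma_arcs 2 p"
    using unanimity_transfers_majority[OF p xy(3)] xy by (simp add: Gamma_arcs_def)
  ultimately show False
    using is_3cycle_asym[OF cycle] by blast
qed


theorem lemma8:
  assumes "is_profile p"
  shows "(((\<forall>i\<in>Inds. \<forall>j\<in>Inds. i \<noteq> j \<longrightarrow> (\<forall>x. \<not> (is_first p i x \<and> is_first p j x))) \<and>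
          (\<forall>i\<in>Inds. \<forall>j\<in>Inds. i \<noteq> j \<longrightarrow> (\<forall>x. \<not> (is_third p i x \<and> is_third p j x))))
         \<longleftrightarrow> is_3cycle Alts (Gamma_arcs 2 p))
     \<and> (is_3cycle Alts (Gamma_arcs 2 p) \<longrightarrow> Gamma_arcs 3 p = {})
     \<and> mu p = mu (rev_profile p)"
proof -
  have rev: "is_profile (rev_profile p)" and no_winner_rev: "D 2 (rev_profile p) = {} \<longleftrightarrow> D 2 p = {}"
    using assms by (simp_all add: is_profile_rev_profile D2_rev_profile_empty_iff)
  have "no_common_choice (is_first p) \<and> no_common_choice (is_third p) \<longleftrightarrow> D 2 p = {}"
    using distinct_firsts_thirds_imp_D2_empty[OF assms] common_first_imp_D2_nonempty[OF assms]
      common_first_imp_D2_nonempty[OF rev] no_winner_rev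
    by (auto simp: is_first_rev_profile)
  moreover have "mu p = mu (rev_profile p)"
    using mu_eq[OF D3_nonempty[OF assms]] mu_eq[OF D3_nonempty[OF rev]] no_winner_rev by simp
  ultimately show ?thesis
    using is_3cycle_Gamma_arcs_2_iff[OF assms] cycle_imp_Gamma_arcs_3_empty[OF assms]
    unfolding no_common_choice_def by blast
qed

end
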